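(* Let $\nu$ be a probability measure on $\mathbb R$ not supported on a single point, and let $\mathcal I\subseteq\mathbb R$ be an open interval such that $Y(\theta)=\int e^{\theta x}\nu(dx)<\infty$ for all $\theta\in\mathcal I$. For $\theta\in\mathcal I$ let $\nu^\theta(dx)=Y(\theta)^{-1}e^{\theta x}\nu(dx)$, let $\varrho(\theta)=\int x\,\nu^\theta(dx)$, which maps $\mathcal I$ continuously and strictly increasingly onto an open interval $\mathcal J$, and let $\theta(\varrho)$ be its inverse. Let $\psi$ be a measurable function on $\mathbb R$ with $\int|\psi|d\nu^\theta<\infty$ for all $\theta\in\mathcal I$, and define $\Psi(\varrho)=\int\psi\,d\nu^{\theta(\varrho)}$ for $\varrho\in\mathcal J$ (an infinitely differentiable function). If $\psi$ is convex on $\mathbb R$, then $\Psi$ is convex on $\mathcal J$. If moreover there is no affine function $g(x)=ax+b$ with $\psi=g$ $\nu$-a.e., then $\Psi''(\varrho)>0$ for all $\varrho\in\mathcal J$, and in particular $\Psi$ is strictly convex on $\mathcal J$. *)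

theory Defs
  imports "HOL-Probability.Probability"
begin

definition tilt_Y :: "real measure \<Rightarrow> real \<Rightarrow> real" where
  "tilt_Y \<nu> \<theta> = (\<integral>x. exp (\<theta> * x) \<partial>\<nu>)"

definition tilt :: "real measure \<Rightarrow> real \<Rightarrow> real measure" where
  "tilt \<nu> \<theta> = density \<nu> (\<lambda>x. ennreal (exp (\<theta> * x) / tilt_Y \<nu> \<theta>))"

definition tilt_mean :: "real measure \<Rightarrow> real \<Rightarrow> real" where
  "tilt_mean \<nu> \<theta> = (\<integral>x. x \<partial>(tilt \<nu> \<theta>))"

definition tilt_Psi :: "real measure \<Rightarrow> real set \<Rightarrow> (real \<Rightarrow> real) \<Rightarrow> real \<Rightarrow> real" where
  "tilt_Psi \<nu> I \<psi> r = (\<integral>x. \<psi> x \<partial>(tilt \<nu> (the_inv_into I (tilt_mean \<nu>) r)))"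

definition strictly_convex_on :: "real set \<Rightarrow> (real \<Rightarrow> real) \<Rightarrow> bool" where
  "strictly_convex_on S f \<longleftrightarrow>
     (\<forall>x\<in>S. \<forall>y\<in>S. \<forall>t. x \<noteq> y \<and> 0 < t \<and> t < 1 \<longrightarrow>
        f ((1 - t) * x + t * y) < (1 - t) * f x + t * f y)"

end

(*
  Write m_k(\<theta>) and p_k(\<theta>) for the moments of x^k and x^k \<psi>(x) under \<nu>^\<theta>.
  Differentiating under the integral gives m_k' = m_(k+1) - m_k m_1 and likewise for p_k,
  so \<rho>' = Var_\<theta>(x) > 0, and the inverse function rule yields
  \<Psi>'(\<rho>) = Cov_\<theta>(x, \<psi>) / Var_\<theta>(x), the slope of the least-squares regression of
  \<psi> on x under \<nu>^\<theta>. Differentiating once more, \<Psi>''(\<rho>) Var_\<theta>(x)^2 = E_\<theta>[x^2 \<phi>],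
  where \<phi> is \<psi> minus its regression line, so that \<phi> is orthogonal to 1 and x.
  For convex \<phi> the set {\<phi> < 0} is an interval; hence there is a quadratic q with
  nonnegative leading coefficient c such that \<phi> q \<ge> 0, strictly where \<phi> < 0.
  Orthogonality turns E_\<theta>[\<phi> q] into c E_\<theta>[x^2 \<phi>], which is therefore nonnegative,
  and positive unless \<phi> = 0 a.e., that is, unless \<psi> is a.e. affine.
*)

theory Submission
  imports Defs
begin

section \<open>Convexity and inverse functions on the real line\<close>

lemma strict_mono_on_if_deriv_pos:
  fixes \<rho> :: "real \<Rightarrow> real" and I :: "real set"
  assumes "is_interval I"
    and "\<And>t. t \<in> I \<Longrightarrow> (\<rho> has_real_derivative \<rho>' t) (at t)" "\<And>t. t \<in> I \<Longrightarrow> \<rho>' t > 0"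
  shows "strict_mono_on I \<rho>"
proof (rule strict_mono_onI)
  fix a b assume "a \<in> I" "b \<in> I" "a < b"
  show "\<rho> a < \<rho> b"
  proof (rule DERIV_pos_imp_increasing[OF \<open>a < b\<close>])
    fix t assume "a \<le> t" "t \<le> b"
    then have "t \<in> I" using assms(1) \<open>a \<in> I\<close> \<open>b \<in> I\<close> unfolding is_interval_1 by blast
    then show "\<exists>y. (\<rho> has_real_derivative y) (at t) \<and> 0 < y" using assms(2,3) by blast
  qed
qed

lemma strictly_convex_on_if_deriv2_pos:
  fixes f :: "real \<Rightarrow> real"
  assumes C: "convex C"
    and f': "\<And>x. x \<in> C \<Longrightarrow> (f has_real_derivative f' x) (at x)"
    and f'': "\<And>x. x \<in> C \<Longrightarrow> (f' has_real_derivative f'' x) (at x)"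
    and pos: "\<And>x. x \<in> C \<Longrightarrow> f'' x > 0"
  shows "strictly_convex_on C f"
proof -
  have seg: "{a..b} \<subseteq> C" if "a \<in> C" "b \<in> C" "a < b" for a b
    using atMostAtLeast_subset_convex[OF C that] .
  have "strict_mono_on C f'"
    using C f'' pos by (intro strict_mono_on_if_deriv_pos) (auto simp: is_interval_convex_1)
  have chord: "f ((1 - t) * x + t * y) < (1 - t) * f x + t * f y"
    if xy: "x \<in> C" "y \<in> C" "x < y" and t: "0 < t" "t < 1" for x y t :: real
  proof -
    define z where "z = (1 - t) * x + t * y"
    have zx: "z - x = t * (y - x)" and yz: "y - z = (1 - t) * (y - x)"
      by (simp_all add: z_def algebra_simps)
    have "x < z" "z < y" using zx yz t xy by (metis diff_gt_0_iff_gt mult_pos_pos)+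
    then have zC: "z \<in> C" using seg[OF xy] by auto
    obtain a where a: "x < a" "a < z" "f z - f x = (z - x) * f' a"
      using MVT2[OF \<open>x < z\<close>] seg[OF xy(1) zC \<open>x < z\<close>] f' by (meson atLeastAtMost_iff subsetD)
    obtain b where b: "z < b" "b < y" "f y - f z = (y - z) * f' b"
      using MVT2[OF \<open>z < y\<close>] seg[OF zC xy(2) \<open>z < y\<close>] f' by (meson atLeastAtMost_iff subsetD)
    have "a \<in> C" "b \<in> C"
      using seg[OF xy] a(1,2) b(1,2) \<open>x < z\<close> \<open>z < y\<close> by (auto simp: subset_iff)
    then have "f' a < f' b"
      using \<open>strict_mono_on C f'\<close> a(2) b(1) by (simp add: strict_mono_on_def)
    have "(1 - t) * f x + t * f y - f z = t * (1 - t) * (y - x) * (f' b - f' a)"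
      using a(3) b(3) unfolding zx yz by algebra
    also have "\<dots> > 0" using t xy \<open>f' a < f' b\<close> by simp
    finally show ?thesis unfolding z_def by simp
  qed
  show ?thesis unfolding strictly_convex_on_def
  proof (intro ballI allI impI)
    fix x y t :: real assume "x \<in> C" "y \<in> C" "x \<noteq> y \<and> 0 < t \<and> t < 1"
    then show "f ((1 - t) * x + t * y) < (1 - t) * f x + t * f y"
      using chord[of x y t] chord[of y x "1 - t"] by (cases "x < y") (auto simp: algebra_simps)
  qed
qed

lemma has_real_derivative_comp_the_inv_into:
  fixes \<rho> f :: "real \<Rightarrow> real" and I :: "real set"
  assumes I: "open I" "is_interval I"
    and \<rho>': "\<And>t. t \<in> I \<Longrightarrow> (\<rho> has_real_derivative \<rho>' t) (at t)" "\<And>t. t \<in> I \<Longrightarrow> \<rho>' t > 0"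
    and f': "(f has_real_derivative f') (at \<theta>)" and "\<theta> \<in> I"
  shows "((\<lambda>r. f (the_inv_into I \<rho> r)) has_real_derivative f' / \<rho>' \<theta>) (at (\<rho> \<theta>))"
proof -
  have "inj_on \<rho> I"
    using strict_mono_on_if_deriv_pos[OF I(2) \<rho>'] by (rule strict_mono_on_imp_inj_on)
  have inv: "the_inv_into I \<rho> (\<rho> t) = t" if "t \<in> I" for t
    using the_inv_into_f_f[OF \<open>inj_on \<rho> I\<close> that] .
  have "continuous_on I \<rho>"
    by (intro continuous_at_imp_continuous_on ballI DERIV_isCont[OF \<rho>'(1)])
  have "(the_inv_into I \<rho> has_derivative (*) (inverse (\<rho>' \<theta>))) (at (\<rho> \<theta>))"
  proof (rule has_derivative_inverse_strong[OF I(1) \<open>\<theta> \<in> I\<close> \<open>continuous_on I \<rho>\<close> inv])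
    show "(\<rho> has_derivative (*) (\<rho>' \<theta>)) (at \<theta>)"
      using \<rho>'(1)[OF \<open>\<theta> \<in> I\<close>] by (simp add: has_field_derivative_def)
    show "(*) (\<rho>' \<theta>) \<circ> (*) (inverse (\<rho>' \<theta>)) = id"
      using \<rho>'(2)[OF \<open>\<theta> \<in> I\<close>] by (simp add: fun_eq_iff)
  qed
  then have "(the_inv_into I \<rho> has_real_derivative inverse (\<rho>' \<theta>)) (at (\<rho> \<theta>))"
    by (simp add: has_field_derivative_def)
  from DERIV_chain2[OF _ this] show ?thesis
    using f' inv[OF \<open>\<theta> \<in> I\<close>] by (simp add: divide_inverse)
qed

section \<open>Convex functions orthogonal to affine functions\<close>

lemma convex_on_UNIV_diff_affine:
  fixes \<psi> :: "real \<Rightarrow> real"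
  assumes "convex_on UNIV \<psi>"
  shows "convex_on UNIV (\<lambda>x. \<psi> x - b - a * x)"
proof -
  have "concave_on UNIV (\<lambda>x. b + a * x)"
    unfolding concave_on_iff by (auto simp: algebra_simps simp flip: distrib_left distrib_right)
  then show ?thesis using convex_on_diff[OF assms] by (simp add: diff_diff_eq)
qed

lemma convex_on_UNIV_negative_between:
  fixes \<phi> :: "real \<Rightarrow> real"
  assumes "convex_on UNIV \<phi>" "\<phi> y < 0" "\<phi> z < 0" "y \<le> x" "x \<le> z"
  shows "\<phi> x < 0"
proof (cases "y = z")
  case False
  define t where "t = (x - y) / (z - y)"
  have "y < z" using False assms by simp
  then have t: "0 \<le> t" "t \<le> 1" using assms by (auto simp: t_def divide_simps)
  have "t * (z - y) = x - y" using \<open>y < z\<close> by (simp add: t_def)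
  then have x: "(1 - t) *\<^sub>R y + t *\<^sub>R z = x" by (simp add: left_diff_distrib right_diff_distrib)
  have "\<phi> x \<le> (1 - t) * \<phi> y + t * \<phi> z"
    using convex_onD[OF assms(1) t] x by (metis UNIV_I)
  also have "\<dots> \<le> (1 - t) * max (\<phi> y) (\<phi> z) + t * max (\<phi> y) (\<phi> z)"
    using t by (intro add_mono mult_left_mono) auto
  also have "\<dots> < 0" using assms by (simp add: algebra_simps)
  finally show ?thesis .
qed (use assms in auto)

lemma convex_on_quadratic_multiplier:
  fixes \<phi> :: "real \<Rightarrow> real"
  assumes cvx: "convex_on UNIV \<phi>"
  obtains c a b where "c \<ge> 0"
    and "\<And>x. \<phi> x * (c * x\<^sup>2 + a * x + b) \<ge> 0"
    and "\<And>x. \<phi> x < 0 \<Longrightarrow> \<phi> x * (c * x\<^sup>2 + a * x + b) > 0"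
proof (cases "\<exists>y. \<phi> y < 0")
  case False
  then have "\<phi> x \<ge> 0" for x by (simp add: not_less)
  then show thesis by (intro that[of 0 0 1]) (simp_all add: not_less[symmetric])
next
  case True
  define N where "N = {x. \<phi> x < 0}"
  have "N \<noteq> {}" using True by (auto simp: N_def)
  have "open N"
    unfolding N_def using convex_on_continuous[OF open_UNIV cvx]
    by (intro open_Collect_less) (auto intro: continuous_intros)
  have between: "x \<in> N" if "y \<in> N" "z \<in> N" "y \<le> x" "x \<le> z" for x y z
    using convex_on_UNIV_negative_between[OF cvx, of y z x] that by (simp add: N_def)
  have Inf_less: "Inf N < x" if "bdd_below N" "x \<in> N" for x
  proof -
    obtain e where "e > 0" "ball x e \<subseteq> N" using \<open>open N\<close> \<open>x \<in> N\<close> open_contains_ball by blast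
    then have "x - e / 2 \<in> N" by (simp add: dist_real_def subset_iff)
    then show ?thesis using cInf_lower[OF _ that(1)] \<open>e > 0\<close> by force
  qed
  have less_Sup: "x < Sup N" if "bdd_above N" "x \<in> N" for x
  proof -
    obtain e where "e > 0" "ball x e \<subseteq> N" using \<open>open N\<close> \<open>x \<in> N\<close> open_contains_ball by blast
    then have "x + e / 2 \<in> N" by (simp add: dist_real_def subset_iff)
    then show ?thesis using cSup_upper[OF _ that(1)] \<open>e > 0\<close> by force
  qed
  have outside: "(bdd_below N \<and> x \<le> Inf N) \<or> (bdd_above N \<and> Sup N \<le> x)" if "x \<notin> N" for x
  proof -
    have "(\<forall>y\<in>N. x \<le> y) \<or> (\<forall>z\<in>N. z \<le> x)"
      using between that by (meson linear)
    then show ?thesis using \<open>N \<noteq> {}\<close> by (meson bdd_above_def bdd_below_def cInf_greatest cSup_least)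
  qed
  \<comment> \<open>\<open>N\<close> is an open interval; \<open>-L x * R x\<close> is \<open>(x - Inf N) * (x - Sup N)\<close>,
    with the factor belonging to a missing endpoint replaced by a constant.\<close>
  define L where "L x = (if bdd_below N then x - Inf N else 1)" for x
  define R where "R x = (if bdd_above N then Sup N - x else 1)" for x
  have LR_pos: "L x * R x > 0" if "x \<in> N" for x
    using Inf_less less_Sup that by (simp add: L_def R_def)
  have LR_nonpos: "L x * R x \<le> 0" if "x \<notin> N" for x
  proof -
    obtain x0 where "x0 \<in> N" using \<open>N \<noteq> {}\<close> by blast
    then show ?thesis
      using outside[OF that] Inf_less[of x0] less_Sup[of x0]
      by (auto simp: L_def R_def mult_nonpos_nonneg mult_nonneg_nonpos)
  qed
  define c where "c = (if bdd_below N \<and> bdd_above N then 1 else 0 :: real)"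
  define a where "a = (if bdd_below N then (if bdd_above N then - Inf N - Sup N else -1)
                       else (if bdd_above N then 1 else 0))"
  define b where "b = (if bdd_below N then (if bdd_above N then Inf N * Sup N else Inf N)
                       else (if bdd_above N then - Sup N else -1))"
  have q: "c * x\<^sup>2 + a * x + b = - (L x * R x)" for x
    by (simp add: L_def R_def a_def b_def c_def power2_eq_square algebra_simps)
  show thesis
  proof (rule that)
    show "c \<ge> 0" by (simp add: c_def)
    show "\<phi> x * (c * x\<^sup>2 + a * x + b) \<ge> 0" for x
      using LR_pos[of x] LR_nonpos[of x] unfolding q N_def
      by (cases "\<phi> x < 0") (simp_all add: mult_le_0_iff)
    show "\<phi> x * (c * x\<^sup>2 + a * x + b) > 0" if "\<phi> x < 0" for x
      using LR_pos[of x] that unfolding q N_def by (simp add: mult_neg_pos)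
  qed
qed

lemma convex_orthogonal_affine_second_moment:
  fixes \<phi> :: "real \<Rightarrow> real"
  assumes cvx: "convex_on UNIV \<phi>"
    and int: "integrable M \<phi>" "integrable M (\<lambda>x. x * \<phi> x)" "integrable M (\<lambda>x. x\<^sup>2 * \<phi> x)"
    and orth: "(\<integral>x. \<phi> x \<partial>M) = 0" "(\<integral>x. x * \<phi> x \<partial>M) = 0"
  shows "(\<integral>x. x\<^sup>2 * \<phi> x \<partial>M) > 0 \<or> (AE x in M. \<phi> x = 0)"
proof (rule disjCI)
  assume not_zero: "\<not> (AE x in M. \<phi> x = 0)"
  obtain c a b where c: "c \<ge> 0"
    and q_nonneg: "\<And>x. \<phi> x * (c * x\<^sup>2 + a * x + b) \<ge> 0"
    and q_pos: "\<And>x. \<phi> x < 0 \<Longrightarrow> \<phi> x * (c * x\<^sup>2 + a * x + b) > 0"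
    using convex_on_quadratic_multiplier[OF cvx] by blast
  have q_eq: "(\<lambda>x. \<phi> x * (c * x\<^sup>2 + a * x + b)) = (\<lambda>x. c * (x\<^sup>2 * \<phi> x) + a * (x * \<phi> x) + b * \<phi> x)"
    by (simp add: fun_eq_iff algebra_simps)
  have q_int: "integrable M (\<lambda>x. \<phi> x * (c * x\<^sup>2 + a * x + b))"
    unfolding q_eq using int by auto
  have "\<not> (AE x in M. \<phi> x \<ge> 0)"
  proof
    assume "AE x in M. \<phi> x \<ge> 0"
    then have "AE x in M. \<phi> x = 0" using integral_nonneg_eq_0_iff_AE[OF int(1)] orth(1) by simp
    then show False using not_zero by blast
  qed
  then have "\<not> (AE x in M. \<phi> x * (c * x\<^sup>2 + a * x + b) = 0)"
  proof (rule contrapos_nn)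
    assume "AE x in M. \<phi> x * (c * x\<^sup>2 + a * x + b) = 0"
    then show "AE x in M. \<phi> x \<ge> 0"
      by (rule eventually_mono) (metis q_pos less_irrefl not_le)
  qed
  then have "(\<integral>x. \<phi> x * (c * x\<^sup>2 + a * x + b) \<partial>M) \<noteq> 0"
    using integral_nonneg_eq_0_iff_AE[OF q_int] q_nonneg by simp
  moreover have "(\<integral>x. \<phi> x * (c * x\<^sup>2 + a * x + b) \<partial>M) = c * (\<integral>x. x\<^sup>2 * \<phi> x \<partial>M)"
    unfolding q_eq using int orth by simp
  moreover have "(\<integral>x. \<phi> x * (c * x\<^sup>2 + a * x + b) \<partial>M) \<ge> 0"
    using q_nonneg by (simp add: integral_nonneg)
  ultimately have "c * (\<integral>x. x\<^sup>2 * \<phi> x \<partial>M) > 0" by linarith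
  then show "(\<integral>x. x\<^sup>2 * \<phi> x \<partial>M) > 0"
    using c by (simp add: zero_less_mult_iff)
qed

text \<open>For the moments \<open>m k\<close>, \<open>p k\<close> of \<open>x ^ k\<close> and \<open>x ^ k * \<psi> x\<close> under a tilted measure,
  \<open>V = m 2 - (m 1)\<^sup>2\<close> and \<open>C = p 1 - p 0 * m 1\<close> are \<open>Var(x)\<close> and \<open>Cov(x, \<psi>)\<close>; since
  \<open>m k' = m (k + 1) - m k * m 1\<close> (and likewise for \<open>p\<close>), this is \<open>C' * V - C * V'\<close>.\<close>

definition regression_curvature :: "(nat \<Rightarrow> real) \<Rightarrow> (nat \<Rightarrow> real) \<Rightarrow> real" where
  "regression_curvature m p =
     (let V = m 2 - (m 1)\<^sup>2; C = p 1 - p 0 * m 1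
      in (p 2 - p 1 * m 1 - (C * m 1 + V * p 0)) * V - C * (m 3 - m 2 * m 1 - 2 * V * m 1))"

lemma regression_curvature_eq:
  assumes "c * (m 2 - (m 1)\<^sup>2) = p 1 - p 0 * m 1"
  shows "regression_curvature m p = (m 2 - (m 1)\<^sup>2) * (p 2 - (p 0 - c * m 1) * m 2 - c * m 3)"
proof -
  have "(m 2 - (m 1)\<^sup>2) * (p 2 - (p 0 - c * m 1) * m 2 - c * m 3)
      = (m 2 - (m 1)\<^sup>2) * (p 2 - p 0 * m 2) + (c * (m 2 - (m 1)\<^sup>2)) * (m 1 * m 2 - m 3)"
    by algebra
  also have "\<dots> = regression_curvature m p"
    unfolding assms regression_curvature_def Let_def by (simp add: power2_eq_square algebra_simps)
  finally show ?thesis ..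
qed

lemma regression_curvature_convex:
  fixes M :: "real measure" and \<psi> :: "real \<Rightarrow> real" and m p :: "nat \<Rightarrow> real"
  assumes "prob_space M" and cvx: "convex_on UNIV \<psi>"
    and int_x: "\<And>k. k \<le> 3 \<Longrightarrow> integrable M (\<lambda>x. x ^ k)"
    and int_\<psi>: "\<And>k. k \<le> 2 \<Longrightarrow> integrable M (\<lambda>x. x ^ k * \<psi> x)"
    and m: "\<And>k. m k = (\<integral>x. x ^ k \<partial>M)" and p: "\<And>k. p k = (\<integral>x. x ^ k * \<psi> x \<partial>M)"
    and var_pos: "m 2 - (m 1)\<^sup>2 > 0"
  shows "regression_curvature m p > 0 \<or> (\<exists>a b. AE x in M. \<psi> x = a * x + b)"
    and "regression_curvature m p \<ge> 0"
proof -
  define V where "V = m 2 - (m 1)\<^sup>2"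
  define c where "c = (p 1 - p 0 * m 1) / V"
  define b where "b = p 0 - c * m 1"
  define \<phi> where "\<phi> x = \<psi> x - b - c * x" for x
  have \<phi>_moment: "integrable M (\<lambda>x. x ^ k * \<phi> x) \<and> (\<integral>x. x ^ k * \<phi> x \<partial>M) = p k - b * m k - c * m (Suc k)"
    if "k \<le> 2" for k
  proof -
    have "(\<lambda>x. x ^ k * \<phi> x) = (\<lambda>x. x ^ k * \<psi> x - b * x ^ k - c * x ^ Suc k)"
      by (simp add: \<phi>_def fun_eq_iff algebra_simps)
    then show ?thesis
      using int_\<psi>[of k] int_x[of k] int_x[of "Suc k"] that by (simp add: m p)
  qed
  have "m 0 = 1" by (simp add: m prob_space.prob_space[OF \<open>prob_space M\<close>])
  have "c * V = p 1 - p 0 * m 1" using var_pos by (simp add: c_def V_def)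
  then have orth: "(\<integral>x. \<phi> x \<partial>M) = 0" "(\<integral>x. x * \<phi> x \<partial>M) = 0"
    using \<phi>_moment[of 0] \<phi>_moment[of 1] \<open>m 0 = 1\<close>
    by (simp_all add: b_def V_def power2_eq_square numeral_2_eq_2 algebra_simps)
  have curv: "regression_curvature m p = V * (\<integral>x. x\<^sup>2 * \<phi> x \<partial>M)"
    using regression_curvature_eq[of c m p] \<open>c * V = p 1 - p 0 * m 1\<close> \<phi>_moment[of 2]
    by (simp add: V_def b_def numeral_3_eq_3)
  have "convex_on UNIV \<phi>"
    using convex_on_UNIV_diff_affine[OF cvx] by (simp add: \<phi>_def[abs_def])
  then have J_cases: "(\<integral>x. x\<^sup>2 * \<phi> x \<partial>M) > 0 \<or> (AE x in M. \<phi> x = 0)"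
    using \<phi>_moment[of 0] \<phi>_moment[of 1] \<phi>_moment[of 2] orth
    by (intro convex_orthogonal_affine_second_moment) simp_all
  have affine: "\<exists>a b. AE x in M. \<psi> x = a * x + b" if "AE x in M. \<phi> x = 0"
    using that by (intro exI[of _ c] exI[of _ b]) (auto simp: \<phi>_def elim!: eventually_mono)
  have J_zero: "(\<integral>x. x\<^sup>2 * \<phi> x \<partial>M) = 0" if "AE x in M. \<phi> x = 0"
    using that by (intro integral_eq_zero_AE) (auto elim!: eventually_mono)
  have "V > 0" using var_pos by (simp add: V_def)
  show "regression_curvature m p > 0 \<or> (\<exists>a b. AE x in M. \<psi> x = a * x + b)"
    using J_cases affine \<open>V > 0\<close> curv by auto
  show "regression_curvature m p \<ge> 0"
    using J_cases J_zero \<open>V > 0\<close> curv by auto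
qed

section \<open>Differentiation under the Laplace integral\<close>

lemma exp_abs_le_exp_plus_exp_uminus: "exp \<bar>x :: real\<bar> \<le> exp x + exp (- x)"
  by (cases "x \<ge> 0") auto

lemma abs_exp_minus_one_minus_le: "\<bar>exp (u :: real) - 1 - u\<bar> \<le> u\<^sup>2 * exp \<bar>u\<bar>"
proof -
  obtain t where t: "\<bar>t\<bar> \<le> \<bar>u\<bar>" "exp u = (\<Sum>m<2. u ^ m / fact m) + exp t / fact 2 * u ^ 2"
    using Maclaurin_exp_le[of u 2] by blast
  then have "\<bar>exp u - 1 - u\<bar> = exp t / 2 * u\<^sup>2" by (simp add: numeral_2_eq_2)
  also have "\<dots> \<le> exp \<bar>u\<bar> * u\<^sup>2"
  proof (rule mult_right_mono)
    have "exp t \<le> exp \<bar>u\<bar>" using t(1) abs_ge_self[of t] by simp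
    then show "exp t / 2 \<le> exp \<bar>u\<bar>" using exp_gt_zero[of t] by linarith
  qed simp
  finally show ?thesis by (simp add: mult.commute)
qed

lemma abs_mult_exp_le_exp_shifts:
  fixes d \<theta> x :: real
  assumes "d > 0"
  shows "\<bar>x * exp (\<theta> * x)\<bar> \<le> (exp ((\<theta> + d) * x) + exp ((\<theta> - d) * x)) / d"
proof -
  have "d * \<bar>x\<bar> * exp (\<theta> * x) \<le> (exp (d * x) + exp (- (d * x))) * exp (\<theta> * x)"
  proof (rule mult_right_mono)
    have "\<bar>d * x\<bar> = d * \<bar>x\<bar>" using assms by (simp add: abs_mult)
    then show "d * \<bar>x\<bar> \<le> exp (d * x) + exp (- (d * x))"
      using exp_ge_add_one_self[of "\<bar>d * x\<bar>"] exp_abs_le_exp_plus_exp_uminus[of "d * x"] by linarith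
  qed simp
  also have "\<dots> = exp ((\<theta> + d) * x) + exp ((\<theta> - d) * x)"
    by (simp add: distrib_right flip: exp_add) (simp add: algebra_simps)
  finally show ?thesis using assms by (simp add: field_simps abs_mult)
qed

lemma abs_exp_taylor1_le_exp_shifts:
  fixes d \<theta> t x :: real
  assumes "\<bar>t - \<theta>\<bar> \<le> d"
  shows "\<bar>exp (t * x) - exp (\<theta> * x) - (t - \<theta>) * (x * exp (\<theta> * x))\<bar>
           \<le> (t - \<theta>)\<^sup>2 * (x\<^sup>2 * (exp ((\<theta> + d) * x) + exp ((\<theta> - d) * x)))"
proof -
  define u where "u = (t - \<theta>) * x"
  have "exp (t * x) = exp (\<theta> * x) * exp u"
    unfolding u_def by (simp add: algebra_simps flip: exp_add)
  then have "exp (t * x) - exp (\<theta> * x) - (t - \<theta>) * (x * exp (\<theta> * x))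
          = exp (\<theta> * x) * (exp u - 1 - u)"
    by (simp add: u_def algebra_simps)
  then have "\<bar>exp (t * x) - exp (\<theta> * x) - (t - \<theta>) * (x * exp (\<theta> * x))\<bar>
          = exp (\<theta> * x) * \<bar>exp u - 1 - u\<bar>"
    by (simp add: abs_mult)
  also have "\<dots> \<le> exp (\<theta> * x) * (u\<^sup>2 * exp \<bar>d * x\<bar>)"
  proof -
    have "\<bar>u\<bar> \<le> \<bar>d * x\<bar>" using assms by (simp add: u_def abs_mult mult_right_mono)
    then show ?thesis
      by (intro mult_left_mono order.trans[OF abs_exp_minus_one_minus_le]) (auto intro: mult_left_mono)
  qed
  also have "\<dots> \<le> exp (\<theta> * x) * (u\<^sup>2 * (exp (d * x) + exp (- (d * x))))"
    using exp_abs_le_exp_plus_exp_uminus[of "d * x"] by (intro mult_left_mono) auto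
  also have "\<dots> = (t - \<theta>)\<^sup>2 * (x\<^sup>2 * (exp ((\<theta> + d) * x) + exp ((\<theta> - d) * x)))"
  proof -
    have "exp ((\<theta> + d) * x) = exp (\<theta> * x) * exp (d * x)"
      and "exp ((\<theta> - d) * x) = exp (\<theta> * x) * exp (- (d * x))"
      by (simp_all add: algebra_simps flip: exp_add)
    moreover have "u\<^sup>2 = (t - \<theta>)\<^sup>2 * x\<^sup>2" unfolding u_def by (rule power_mult_distrib)
    ultimately
    show ?thesis by (simp only:) (simp add: algebra_simps)
  qed
  finally show ?thesis .
qed

definition laplace_integral :: "real measure \<Rightarrow> (real \<Rightarrow> real) \<Rightarrow> real \<Rightarrow> real" where
  "laplace_integral M h \<theta> = (\<integral>x. h x * exp (\<theta> * x) \<partial>M)"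

definition laplace_integrable :: "real measure \<Rightarrow> real set \<Rightarrow> (real \<Rightarrow> real) \<Rightarrow> bool" where
  "laplace_integrable M I h \<longleftrightarrow> (\<forall>\<theta>\<in>I. integrable M (\<lambda>x. h x * exp (\<theta> * x)))"

lemma open_contains_abs_le:
  fixes I :: "real set"
  assumes "open I" "\<theta> \<in> I"
  obtains d where "d > 0" "\<And>t. \<bar>t - \<theta>\<bar> \<le> d \<Longrightarrow> t \<in> I"
proof -
  obtain d where "d > 0" "cball \<theta> d \<subseteq> I" using assms open_contains_cball by blast
  then show thesis by (intro that[of d]) (auto simp: dist_real_def subset_iff)
qed

lemma laplace_integrable_mult_ident:
  assumes "sets M = sets borel" "open I" "laplace_integrable M I h"
  shows "laplace_integrable M I (\<lambda>x. x * h x)"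
  unfolding laplace_integrable_def
proof
  fix \<theta> assume "\<theta> \<in> I"
  then obtain d where d: "d > 0" "\<And>t. \<bar>t - \<theta>\<bar> \<le> d \<Longrightarrow> t \<in> I"
    using open_contains_abs_le[OF assms(2)] by blast
  let ?bound = "\<lambda>x. (\<bar>h x * exp ((\<theta> + d) * x)\<bar> + \<bar>h x * exp ((\<theta> - d) * x)\<bar>) / d"
  have "integrable M ?bound"
    using assms(3) d(1) d(2)[of "\<theta> + d"] d(2)[of "\<theta> - d"] unfolding laplace_integrable_def
    by (auto intro!: integrable_abs)
  moreover have "(\<lambda>x. x * (h x * exp (\<theta> * x))) \<in> borel_measurable M"
  proof (rule borel_measurable_times)
    show "(\<lambda>x. x) \<in> borel_measurable M" unfolding measurable_cong_sets[OF assms(1) refl] by simp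
    show "(\<lambda>x. h x * exp (\<theta> * x)) \<in> borel_measurable M"
      using assms(3) \<open>\<theta> \<in> I\<close> by (auto simp: laplace_integrable_def)
  qed
  moreover have "AE x in M. norm (x * (h x * exp (\<theta> * x))) \<le> norm (?bound x)"
  proof (rule AE_I2)
    fix x
    show "norm (x * (h x * exp (\<theta> * x))) \<le> norm (?bound x)"
      using mult_left_mono[OF abs_mult_exp_le_exp_shifts[OF d(1), where \<theta> = \<theta> and x = x]
          abs_ge_zero[of "h x"]] d(1)
      by (simp add: abs_mult divide_simps distrib_left mult.assoc mult.left_commute)
  qed
  ultimately have "integrable M (\<lambda>x. x * (h x * exp (\<theta> * x)))"
    by (rule Bochner_Integration.integrable_bound)
  then show "integrable M (\<lambda>x. x * h x * exp (\<theta> * x))" by (simp add: mult.assoc)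
qed

lemma laplace_integrable_mult_power:
  assumes "sets M = sets borel" "open I" "laplace_integrable M I h"
  shows "laplace_integrable M I (\<lambda>x. x ^ k * h x)"
proof (induction k)
  case (Suc k)
  then show ?case
    using laplace_integrable_mult_ident[OF assms(1,2)] by (simp add: mult.assoc)
qed (use assms in simp)

lemma has_real_derivative_if_quadratic_remainder:
  fixes f :: "real \<Rightarrow> real"
  assumes "d > 0" "\<And>t. \<bar>t - \<theta>\<bar> \<le> d \<Longrightarrow> \<bar>f t - f \<theta> - (t - \<theta>) * D\<bar> \<le> K * (t - \<theta>)\<^sup>2"
  shows "(f has_real_derivative D) (at \<theta>)"
proof -
  have "((\<lambda>t. (f t - f \<theta>) / (t - \<theta>) - D) \<longlongrightarrow> 0) (at \<theta>)"
  proof (rule Lim_null_comparison)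
    have "\<forall>\<^sub>F t in at \<theta>. t \<noteq> \<theta> \<and> \<bar>t - \<theta>\<bar> \<le> d"
      unfolding eventually_at_le using \<open>d > 0\<close> by (auto simp: dist_real_def)
    then show "\<forall>\<^sub>F t in at \<theta>. norm ((f t - f \<theta>) / (t - \<theta>) - D) \<le> K * \<bar>t - \<theta>\<bar>"
    proof (rule eventually_mono)
      fix t assume t: "t \<noteq> \<theta> \<and> \<bar>t - \<theta>\<bar> \<le> d"
      then have "\<bar>f t - f \<theta> - (t - \<theta>) * D\<bar> \<le> K * \<bar>t - \<theta>\<bar> * \<bar>t - \<theta>\<bar>"
        using assms(2) by (simp add: power2_eq_square mult.assoc)
      then show "norm ((f t - f \<theta>) / (t - \<theta>) - D) \<le> K * \<bar>t - \<theta>\<bar>"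
        using t by (simp add: field_simps abs_divide)
    qed
    show "((\<lambda>t. K * \<bar>t - \<theta>\<bar>) \<longlongrightarrow> 0) (at \<theta>)"
      by (rule tendsto_eq_intros refl | simp)+
  qed
  then show ?thesis
    by (simp add: has_field_derivative_iff LIM_zero_iff)
qed

lemma has_real_derivative_laplace_integral:
  assumes "sets M = sets borel" "open I" "laplace_integrable M I h" "\<theta> \<in> I"
  shows "(laplace_integral M h has_real_derivative laplace_integral M (\<lambda>x. x * h x) \<theta>) (at \<theta>)"
proof -
  obtain d where d: "d > 0" "\<And>t. \<bar>t - \<theta>\<bar> \<le> d \<Longrightarrow> t \<in> I"
    using open_contains_abs_le[OF assms(2,4)] by blast
  have int: "integrable M (\<lambda>x. x ^ k * h x * exp (t * x))" if "t \<in> I" for k t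
    using laplace_integrable_mult_power[OF assms(1-3)] that by (simp add: laplace_integrable_def)
  define k where "k x = \<bar>x\<^sup>2 * h x * exp ((\<theta> + d) * x)\<bar> + \<bar>x\<^sup>2 * h x * exp ((\<theta> - d) * x)\<bar>" for x
  have "integrable M k"
    unfolding k_def using int[of "\<theta> + d" 2] int[of "\<theta> - d" 2] d by auto
  show ?thesis
  proof (rule has_real_derivative_if_quadratic_remainder[OF d(1), where K = "\<integral>x. k x \<partial>M"])
    fix t assume t: "\<bar>t - \<theta>\<bar> \<le> d"
    have "laplace_integral M h t - laplace_integral M h \<theta> - (t - \<theta>) * laplace_integral M (\<lambda>x. x * h x) \<theta>
        = (\<integral>x. h x * exp (t * x) - h x * exp (\<theta> * x) - (t - \<theta>) * (x * h x * exp (\<theta> * x)) \<partial>M)"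
      using int[of t 0] int[of \<theta> 0] int[of \<theta> 1] d(2)[OF t] assms(4)
      by (simp add: laplace_integral_def)
    also have "\<bar>\<dots>\<bar> \<le> (\<integral>x. (t - \<theta>)\<^sup>2 * k x \<partial>M)"
    proof (rule integral_abs_bound_integral)
      show "integrable M (\<lambda>x. h x * exp (t * x) - h x * exp (\<theta> * x) - (t - \<theta>) * (x * h x * exp (\<theta> * x)))"
        using int[of t 0] int[of \<theta> 0] int[of \<theta> 1] d(2)[OF t] assms(4) by simp
      show "integrable M (\<lambda>x. (t - \<theta>)\<^sup>2 * k x)" using \<open>integrable M k\<close> by simp
      show "\<bar>h x * exp (t * x) - h x * exp (\<theta> * x) - (t - \<theta>) * (x * h x * exp (\<theta> * x))\<bar>
          \<le> (t - \<theta>)\<^sup>2 * k x" for x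
      proof -
        have "\<bar>h x * exp (t * x) - h x * exp (\<theta> * x) - (t - \<theta>) * (x * h x * exp (\<theta> * x))\<bar>
            = \<bar>h x\<bar> * \<bar>exp (t * x) - exp (\<theta> * x) - (t - \<theta>) * (x * exp (\<theta> * x))\<bar>"
          by (simp add: abs_mult[symmetric] algebra_simps)
        then show ?thesis
          using mult_left_mono[OF abs_exp_taylor1_le_exp_shifts[OF t, where x = x] abs_ge_zero[of "h x"]]
          by (simp add: k_def abs_mult algebra_simps)
      qed
    qed
    finally show "\<bar>laplace_integral M h t - laplace_integral M h \<theta> - (t - \<theta>) * laplace_integral M (\<lambda>x. x * h x) \<theta>\<bar>
        \<le> (\<integral>x. k x \<partial>M) * (t - \<theta>)\<^sup>2"
      by (simp add: mult.commute)
  qed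
qed

section \<open>Exponential tilting\<close>

definition tilt_moment :: "real measure \<Rightarrow> (real \<Rightarrow> real) \<Rightarrow> real \<Rightarrow> nat \<Rightarrow> real" where
  "tilt_moment \<nu> g \<theta> k = (\<integral>x. x ^ k * g x \<partial>tilt \<nu> \<theta>)"

definition tilt_variance :: "real measure \<Rightarrow> real \<Rightarrow> real" where
  "tilt_variance \<nu> \<theta> = tilt_moment \<nu> (\<lambda>_. 1) \<theta> 2 - (tilt_moment \<nu> (\<lambda>_. 1) \<theta> 1)\<^sup>2"

definition tilt_covariance :: "real measure \<Rightarrow> (real \<Rightarrow> real) \<Rightarrow> real \<Rightarrow> real" where
  "tilt_covariance \<nu> \<psi> \<theta> = tilt_moment \<nu> \<psi> \<theta> 1 - tilt_moment \<nu> \<psi> \<theta> 0 * tilt_moment \<nu> (\<lambda>_. 1) \<theta> 1"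

locale exponential_family =
  fixes \<nu> :: "real measure" and I :: "real set"
  assumes prob: "prob_space \<nu>" and sets_eq: "sets \<nu> = sets borel"
    and open_I: "open I" and interval_I: "is_interval I"
    and integrable_exp: "\<forall>\<theta>\<in>I. integrable \<nu> (\<lambda>x. exp (\<theta> * x))"
begin

lemma laplace_integrable_one: "laplace_integrable \<nu> I (\<lambda>_. 1)"
  using integrable_exp by (simp add: laplace_integrable_def)

lemma borel_measurable_nu_iff [simp]: "f \<in> borel_measurable \<nu> \<longleftrightarrow> f \<in> borel_measurable borel"
  unfolding measurable_cong_sets[OF sets_eq refl] ..

lemma tilt_Y_pos:
  assumes "\<theta> \<in> I"
  shows "tilt_Y \<nu> \<theta> > 0"
proof -
  have "\<not> (AE x in \<nu>. exp (\<theta> * x) = 0)"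
    using prob_space.AE_const[OF prob, of False] by simp
  then have "(\<integral>x. exp (\<theta> * x) \<partial>\<nu>) \<noteq> 0"
    using integral_nonneg_eq_0_iff_AE[of \<nu> "\<lambda>x. exp (\<theta> * x)"] integrable_exp assms by auto
  moreover have "(\<integral>x. exp (\<theta> * x) \<partial>\<nu>) \<ge> 0" by simp
  ultimately show ?thesis unfolding tilt_Y_def by linarith
qed

lemma
  assumes "\<theta> \<in> I" "h \<in> borel_measurable borel"
  shows integrable_tilt_iff: "integrable (tilt \<nu> \<theta>) h \<longleftrightarrow> integrable \<nu> (\<lambda>x. h x * exp (\<theta> * x))"
    and integral_tilt: "(\<integral>x. h x \<partial>tilt \<nu> \<theta>) = laplace_integral \<nu> h \<theta> / tilt_Y \<nu> \<theta>"
proof -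
  have Y: "tilt_Y \<nu> \<theta> > 0" using tilt_Y_pos[OF assms(1)] .
  have dens: "(\<lambda>x. exp (\<theta> * x) / tilt_Y \<nu> \<theta>) \<in> borel_measurable \<nu>" "AE x in \<nu>. 0 \<le> exp (\<theta> * x) / tilt_Y \<nu> \<theta>"
    using Y by auto
  have h: "h \<in> borel_measurable \<nu>" using assms(2) by simp
  show "integrable (tilt \<nu> \<theta>) h \<longleftrightarrow> integrable \<nu> (\<lambda>x. h x * exp (\<theta> * x))"
  proof -
    have "(\<lambda>x. (exp (\<theta> * x) / tilt_Y \<nu> \<theta>) *\<^sub>R h x) = (\<lambda>x. inverse (tilt_Y \<nu> \<theta>) * (h x * exp (\<theta> * x)))"
      by (simp add: fun_eq_iff field_simps)
    then show ?thesis unfolding tilt_def integrable_density[OF h dens] using Y by simp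
  qed
  show "(\<integral>x. h x \<partial>tilt \<nu> \<theta>) = laplace_integral \<nu> h \<theta> / tilt_Y \<nu> \<theta>"
    unfolding tilt_def integral_density[OF h dens] laplace_integral_def by (simp add: mult.commute)
qed

lemma AE_tiltD:
  assumes "\<theta> \<in> I" "AE x in tilt \<nu> \<theta>. P x"
  shows "AE x in \<nu>. P x"
  using assms(2) tilt_Y_pos[OF assms(1)] unfolding tilt_def
  by (subst (asm) AE_density) auto

lemma prob_space_tilt:
  assumes "\<theta> \<in> I"
  shows "prob_space (tilt \<nu> \<theta>)"
proof (rule prob_spaceI)
  have "emeasure (tilt \<nu> \<theta>) (space (tilt \<nu> \<theta>)) = (\<integral>\<^sup>+x. ennreal (exp (\<theta> * x) / tilt_Y \<nu> \<theta>) \<partial>\<nu>)"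
    unfolding tilt_def by (simp add: emeasure_density)
  also have "\<dots> = ennreal (\<integral>x. exp (\<theta> * x) / tilt_Y \<nu> \<theta> \<partial>\<nu>)"
    using integrable_exp assms tilt_Y_pos[OF assms] by (intro nn_integral_eq_integral) auto
  also have "\<dots> = 1"
    using tilt_Y_pos[OF assms] by (simp add: tilt_Y_def)
  finally show "emeasure (tilt \<nu> \<theta>) (space (tilt \<nu> \<theta>)) = 1" .
qed

lemma has_real_derivative_tilt_moment:
  assumes "g \<in> borel_measurable borel" "laplace_integrable \<nu> I g" "\<theta> \<in> I"
  shows "((\<lambda>t. tilt_moment \<nu> g t k) has_real_derivative
           tilt_moment \<nu> g \<theta> (Suc k) - tilt_moment \<nu> g \<theta> k * tilt_moment \<nu> (\<lambda>_. 1) \<theta> 1) (at \<theta>)"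
proof -
  let ?L = "laplace_integral \<nu>" and ?h = "\<lambda>x. x ^ k * g x"
  have moment: "tilt_moment \<nu> f t j = ?L (\<lambda>x. x ^ j * f x) t / ?L (\<lambda>_. 1) t"
    if "f \<in> borel_measurable borel" "t \<in> I" for f t j
    using integral_tilt[OF \<open>t \<in> I\<close>] that by (simp add: tilt_moment_def tilt_Y_def laplace_integral_def)
  have "laplace_integrable \<nu> I ?h"
    using laplace_integrable_mult_power[OF sets_eq open_I assms(2)] .
  then have "((\<lambda>t. ?L ?h t / ?L (\<lambda>_. 1) t) has_real_derivative
      (?L (\<lambda>x. x * ?h x) \<theta> * ?L (\<lambda>_. 1) \<theta> - ?L ?h \<theta> * ?L (\<lambda>x. x * 1) \<theta>) / (?L (\<lambda>_. 1) \<theta> * ?L (\<lambda>_. 1) \<theta>)) (at \<theta>)"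
    using tilt_Y_pos[OF assms(3)] laplace_integrable_one assms(3)
    by (intro DERIV_divide has_real_derivative_laplace_integral[OF sets_eq open_I])
      (auto simp: tilt_Y_def laplace_integral_def)
  then have "((\<lambda>t. tilt_moment \<nu> g t k) has_real_derivative
      (?L (\<lambda>x. x * ?h x) \<theta> * ?L (\<lambda>_. 1) \<theta> - ?L ?h \<theta> * ?L (\<lambda>x. x * 1) \<theta>) / (?L (\<lambda>_. 1) \<theta> * ?L (\<lambda>_. 1) \<theta>)) (at \<theta>)"
    by (rule has_field_derivative_transform_within_open[OF _ open_I assms(3)]) (simp add: moment assms(1))
  moreover have "(?L (\<lambda>x. x * ?h x) \<theta> * ?L (\<lambda>_. 1) \<theta> - ?L ?h \<theta> * ?L (\<lambda>x. x * 1) \<theta>) / (?L (\<lambda>_. 1) \<theta> * ?L (\<lambda>_. 1) \<theta>)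
      = tilt_moment \<nu> g \<theta> (Suc k) - tilt_moment \<nu> g \<theta> k * tilt_moment \<nu> (\<lambda>_. 1) \<theta> 1"
    using tilt_Y_pos[OF assms(3)] assms
    by (simp add: moment mult.assoc tilt_Y_def laplace_integral_def field_simps)
  ultimately show ?thesis by simp
qed

lemma has_real_derivative_tilt_mean:
  assumes "\<theta> \<in> I"
  shows "(tilt_mean \<nu> has_real_derivative tilt_variance \<nu> \<theta>) (at \<theta>)"
proof -
  have "tilt_mean \<nu> = (\<lambda>t. tilt_moment \<nu> (\<lambda>_. 1) t 1)"
    by (simp add: fun_eq_iff tilt_mean_def tilt_moment_def)
  then show ?thesis
    using has_real_derivative_tilt_moment[OF _ laplace_integrable_one assms, of 1]
    by (simp add: tilt_variance_def power2_eq_square numeral_2_eq_2)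
qed

lemma integrable_tilt_power:
  assumes "\<theta> \<in> I" "g \<in> borel_measurable borel" "laplace_integrable \<nu> I g"
  shows "integrable (tilt \<nu> \<theta>) (\<lambda>x. x ^ k * g x)"
proof -
  have "(\<lambda>x. x ^ k * g x) \<in> borel_measurable borel" using assms(2) by measurable
  then show ?thesis
    using laplace_integrable_mult_power[OF sets_eq open_I assms(3), of k] assms(1)
    by (simp add: integrable_tilt_iff[OF assms(1)] laplace_integrable_def)
qed

lemma tilt_variance_pos:
  assumes "\<not> (\<exists>c. AE x in \<nu>. x = c)" "\<theta> \<in> I"
  shows "tilt_variance \<nu> \<theta> > 0"
proof -
  interpret T: prob_space "tilt \<nu> \<theta>" using prob_space_tilt[OF assms(2)] .
  let ?m = "\<integral>x. x \<partial>tilt \<nu> \<theta>"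
  have "integrable (tilt \<nu> \<theta>) (\<lambda>x. x ^ k * 1)" for k
    by (rule integrable_tilt_power[OF assms(2) borel_measurable_const laplace_integrable_one])
  from this[of 1] this[of 2] have int: "integrable (tilt \<nu> \<theta>) (\<lambda>x. x)" "integrable (tilt \<nu> \<theta>) (\<lambda>x. x\<^sup>2)"
    by simp_all
  have "T.variance (\<lambda>x. x) \<noteq> 0"
  proof
    assume "T.variance (\<lambda>x. x) = 0"
    moreover have "integrable (tilt \<nu> \<theta>) (\<lambda>x. (x - ?m)\<^sup>2)"
      using int by (simp add: power2_diff)
    ultimately have "AE x in tilt \<nu> \<theta>. (x - ?m)\<^sup>2 = 0"
      by (subst (asm) integral_nonneg_eq_0_iff_AE) auto
    then have "AE x in \<nu>. x = ?m"
      by (intro AE_tiltD[OF assms(2)]) (auto elim: eventually_mono)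
    then show False using assms(1) by blast
  qed
  then show ?thesis
    using T.variance_positive[of "\<lambda>x. x"] T.variance_eq[OF int] by (simp add: tilt_variance_def tilt_moment_def)
qed

lemma has_real_derivative_tilt_slope:
  assumes "\<psi> \<in> borel_measurable borel" "laplace_integrable \<nu> I \<psi>" "\<not> (\<exists>c. AE x in \<nu>. x = c)" "\<theta> \<in> I"
  shows "((\<lambda>t. tilt_covariance \<nu> \<psi> t / tilt_variance \<nu> t) has_real_derivative
           regression_curvature (tilt_moment \<nu> (\<lambda>_. 1) \<theta>) (tilt_moment \<nu> \<psi> \<theta>) / (tilt_variance \<nu> \<theta>)\<^sup>2) (at \<theta>)"
proof -
  define m where "m = tilt_moment \<nu> (\<lambda>_. 1)"
  define p where "p = tilt_moment \<nu> \<psi>"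
  have dm: "((\<lambda>t. m t k) has_real_derivative m \<theta> (Suc k) - m \<theta> k * m \<theta> 1) (at \<theta>)" for k
    unfolding m_def using has_real_derivative_tilt_moment[OF _ laplace_integrable_one assms(4)] by simp
  have dp: "((\<lambda>t. p t k) has_real_derivative p \<theta> (Suc k) - p \<theta> k * m \<theta> 1) (at \<theta>)" for k
    unfolding m_def p_def using has_real_derivative_tilt_moment[OF assms(1,2,4)] .
  have "((\<lambda>t. tilt_covariance \<nu> \<psi> t / tilt_variance \<nu> t) has_real_derivative
      ((p \<theta> 2 - p \<theta> 1 * m \<theta> 1 - ((p \<theta> 1 - p \<theta> 0 * m \<theta> 1) * m \<theta> 1 + p \<theta> 0 * (m \<theta> 2 - m \<theta> 1 * m \<theta> 1))) * tilt_variance \<nu> \<theta>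
       - tilt_covariance \<nu> \<psi> \<theta> * (m \<theta> 3 - m \<theta> 2 * m \<theta> 1 - 2 * m \<theta> 1 * (m \<theta> 2 - m \<theta> 1 * m \<theta> 1)))
      / (tilt_variance \<nu> \<theta> * tilt_variance \<nu> \<theta>)) (at \<theta>)"
    unfolding tilt_covariance_def tilt_variance_def m_def[symmetric] p_def[symmetric]
    using tilt_variance_pos[OF assms(3,4)] dm[of 0] dm[of 1] dm[of 2] dp[of 0] dp[of 1]
    by (auto intro!: derivative_eq_intros simp: numeral_2_eq_2 numeral_3_eq_3 tilt_variance_def m_def power2_eq_square algebra_simps)
  then show ?thesis
    by (simp add: regression_curvature_def Let_def tilt_covariance_def tilt_variance_def m_def p_def power2_eq_square algebra_simps)
qed

lemma tilt_Psi_derivatives: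
  assumes "\<psi> \<in> borel_measurable borel" "laplace_integrable \<nu> I \<psi>" "\<not> (\<exists>c. AE x in \<nu>. x = c)"
  obtains \<Psi>' \<Psi>'' where
    "\<And>\<theta>. \<theta> \<in> I \<Longrightarrow> (tilt_Psi \<nu> I \<psi> has_real_derivative \<Psi>' (tilt_mean \<nu> \<theta>)) (at (tilt_mean \<nu> \<theta>))"
    "\<And>\<theta>. \<theta> \<in> I \<Longrightarrow> (\<Psi>' has_real_derivative \<Psi>'' (tilt_mean \<nu> \<theta>)) (at (tilt_mean \<nu> \<theta>))"
    "\<And>\<theta>. \<theta> \<in> I \<Longrightarrow> \<Psi>'' (tilt_mean \<nu> \<theta>)
       = regression_curvature (tilt_moment \<nu> (\<lambda>_. 1) \<theta>) (tilt_moment \<nu> \<psi> \<theta>) / (tilt_variance \<nu> \<theta>) ^ 3"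
proof -
  let ?inv = "the_inv_into I (tilt_mean \<nu>)"
  let ?curv = "\<lambda>t. regression_curvature (tilt_moment \<nu> (\<lambda>_. 1) t) (tilt_moment \<nu> \<psi> t)"
  define Q where "Q t = tilt_covariance \<nu> \<psi> t / tilt_variance \<nu> t" for t
  have var_pos: "tilt_variance \<nu> t > 0" if "t \<in> I" for t
    using tilt_variance_pos[OF assms(3) that] .
  have inv: "?inv (tilt_mean \<nu> t) = t" if "t \<in> I" for t
    using strict_mono_on_if_deriv_pos[OF interval_I has_real_derivative_tilt_mean var_pos] that
    by (intro the_inv_into_f_f strict_mono_on_imp_inj_on)
  have Psi: "tilt_Psi \<nu> I \<psi> = (\<lambda>r. tilt_moment \<nu> \<psi> (?inv r) 0)"
    by (simp add: fun_eq_iff tilt_Psi_def tilt_moment_def)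
  show thesis
  proof (rule that[of "\<lambda>r. Q (?inv r)" "\<lambda>r. ?curv (?inv r) / tilt_variance \<nu> (?inv r) ^ 3"])
    fix \<theta> assume "\<theta> \<in> I"
    have "((\<lambda>t. tilt_moment \<nu> \<psi> t 0) has_real_derivative tilt_covariance \<nu> \<psi> \<theta>) (at \<theta>)"
      using has_real_derivative_tilt_moment[OF assms(1,2) \<open>\<theta> \<in> I\<close>, of 0] by (simp add: tilt_covariance_def)
    from has_real_derivative_comp_the_inv_into[OF open_I interval_I has_real_derivative_tilt_mean var_pos this \<open>\<theta> \<in> I\<close>]
    show "(tilt_Psi \<nu> I \<psi> has_real_derivative Q (?inv (tilt_mean \<nu> \<theta>))) (at (tilt_mean \<nu> \<theta>))"
      unfolding Psi inv[OF \<open>\<theta> \<in> I\<close>] Q_def .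
    from has_real_derivative_comp_the_inv_into[OF open_I interval_I has_real_derivative_tilt_mean var_pos
        has_real_derivative_tilt_slope[OF assms \<open>\<theta> \<in> I\<close>] \<open>\<theta> \<in> I\<close>]
    show "((\<lambda>r. Q (?inv r)) has_real_derivative ?curv (?inv (tilt_mean \<nu> \<theta>)) / tilt_variance \<nu> (?inv (tilt_mean \<nu> \<theta>)) ^ 3)
        (at (tilt_mean \<nu> \<theta>))"
      unfolding inv[OF \<open>\<theta> \<in> I\<close>] Q_def by (simp add: power2_eq_square power3_eq_cube)
    show "?curv (?inv (tilt_mean \<nu> \<theta>)) / tilt_variance \<nu> (?inv (tilt_mean \<nu> \<theta>)) ^ 3 = ?curv \<theta> / tilt_variance \<nu> \<theta> ^ 3"
      unfolding inv[OF \<open>\<theta> \<in> I\<close>] ..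
  qed
qed

lemma tilt_regression_curvature_convex:
  assumes "\<psi> \<in> borel_measurable borel" "laplace_integrable \<nu> I \<psi>" "\<not> (\<exists>c. AE x in \<nu>. x = c)"
    and "convex_on UNIV \<psi>" "\<theta> \<in> I"
  shows "regression_curvature (tilt_moment \<nu> (\<lambda>_. 1) \<theta>) (tilt_moment \<nu> \<psi> \<theta>) \<ge> 0"
    and "\<not> (\<exists>a b. AE x in \<nu>. \<psi> x = a * x + b) \<Longrightarrow>
           regression_curvature (tilt_moment \<nu> (\<lambda>_. 1) \<theta>) (tilt_moment \<nu> \<psi> \<theta>) > 0"
proof -
  have "integrable (tilt \<nu> \<theta>) (\<lambda>x. x ^ k * 1)" for k
    by (rule integrable_tilt_power[OF assms(5) borel_measurable_const laplace_integrable_one])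
  then have int_x: "integrable (tilt \<nu> \<theta>) (\<lambda>x. x ^ k)" for k by simp
  have moments: "tilt_moment \<nu> (\<lambda>_. 1) \<theta> k = (\<integral>x. x ^ k \<partial>tilt \<nu> \<theta>)"
    "tilt_moment \<nu> \<psi> \<theta> k = (\<integral>x. x ^ k * \<psi> x \<partial>tilt \<nu> \<theta>)" for k
    by (simp_all add: tilt_moment_def)
  note curvature = regression_curvature_convex[OF prob_space_tilt[OF assms(5)] assms(4) int_x
      integrable_tilt_power[OF assms(5,1,2)] moments]
  have var: "tilt_moment \<nu> (\<lambda>_. 1) \<theta> 2 - (tilt_moment \<nu> (\<lambda>_. 1) \<theta> 1)\<^sup>2 > 0"
    using tilt_variance_pos[OF assms(3,5)] by (simp add: tilt_variance_def)
  show "regression_curvature (tilt_moment \<nu> (\<lambda>_. 1) \<theta>) (tilt_moment \<nu> \<psi> \<theta>) \<ge> 0"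
    using curvature(2)[OF var] .
  assume "\<not> (\<exists>a b. AE x in \<nu>. \<psi> x = a * x + b)"
  then have "\<not> (\<exists>a b. AE x in tilt \<nu> \<theta>. \<psi> x = a * x + b)"
    using AE_tiltD[OF assms(5)] by blast
  then show "regression_curvature (tilt_moment \<nu> (\<lambda>_. 1) \<theta>) (tilt_moment \<nu> \<psi> \<theta>) > 0"
    using curvature(1)[OF var] by blast
qed

lemma convex_tilt_mean_image: "convex (tilt_mean \<nu> ` I)"
proof -
  have "continuous_on I (tilt_mean \<nu>)"
    using has_real_derivative_tilt_mean by (intro continuous_at_imp_continuous_on ballI DERIV_isCont)
  then show ?thesis
    using interval_I connected_continuous_image is_interval_connected_1 is_interval_convex_1 by blast
qed

lemma tilt_Psi_convex_derivatives:
  assumes "\<psi> \<in> borel_measurable borel" "laplace_integrable \<nu> I \<psi>" "\<not> (\<exists>c. AE x in \<nu>. x = c)"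
    and "convex_on UNIV \<psi>"
  obtains \<Psi>' \<Psi>'' where
    "\<forall>r\<in>tilt_mean \<nu> ` I. (tilt_Psi \<nu> I \<psi> has_real_derivative \<Psi>' r) (at r)"
    "\<forall>r\<in>tilt_mean \<nu> ` I. (\<Psi>' has_real_derivative \<Psi>'' r) (at r)"
    "\<forall>r\<in>tilt_mean \<nu> ` I. \<Psi>'' r \<ge> 0"
    "\<not> (\<exists>a b. AE x in \<nu>. \<psi> x = a * x + b) \<Longrightarrow> \<forall>r\<in>tilt_mean \<nu> ` I. \<Psi>'' r > 0"
proof -
  obtain \<Psi>' \<Psi>'' where
    d1: "\<And>\<theta>. \<theta> \<in> I \<Longrightarrow> (tilt_Psi \<nu> I \<psi> has_real_derivative \<Psi>' (tilt_mean \<nu> \<theta>)) (at (tilt_mean \<nu> \<theta>))" and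
    d2: "\<And>\<theta>. \<theta> \<in> I \<Longrightarrow> (\<Psi>' has_real_derivative \<Psi>'' (tilt_mean \<nu> \<theta>)) (at (tilt_mean \<nu> \<theta>))" and
    curvature: "\<And>\<theta>. \<theta> \<in> I \<Longrightarrow> \<Psi>'' (tilt_mean \<nu> \<theta>)
       = regression_curvature (tilt_moment \<nu> (\<lambda>_. 1) \<theta>) (tilt_moment \<nu> \<psi> \<theta>) / (tilt_variance \<nu> \<theta>) ^ 3"
    using tilt_Psi_derivatives[OF assms(1-3)] by blast
  have sign: "\<Psi>'' (tilt_mean \<nu> \<theta>) \<ge> 0"
    "\<not> (\<exists>a b. AE x in \<nu>. \<psi> x = a * x + b) \<Longrightarrow> \<Psi>'' (tilt_mean \<nu> \<theta>) > 0" if "\<theta> \<in> I" for \<theta>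
  proof -
    have "tilt_variance \<nu> \<theta> ^ 3 > 0" using tilt_variance_pos[OF assms(3) that] by simp
    then show "\<Psi>'' (tilt_mean \<nu> \<theta>) \<ge> 0"
      "\<not> (\<exists>a b. AE x in \<nu>. \<psi> x = a * x + b) \<Longrightarrow> \<Psi>'' (tilt_mean \<nu> \<theta>) > 0"
      using tilt_regression_curvature_convex[OF assms that] curvature[OF that] by simp_all
  qed
  show thesis
    by (rule that[of \<Psi>' \<Psi>'']) (use d1 d2 sign in auto)
qed

end

theorem theoremA1:
  fixes \<nu> :: "real measure" and I :: "real set" and \<psi> :: "real \<Rightarrow> real"
  assumes "prob_space \<nu>"
    and "sets \<nu> = sets borel"
    and "\<not> (\<exists>c. AE x in \<nu>. x = c)"
    and "open I" and "is_interval I" and "I \<noteq> {}"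
    and "\<forall>\<theta>\<in>I. integrable \<nu> (\<lambda>x. exp (\<theta> * x))"
    and "\<psi> \<in> borel_measurable borel"
    and "\<forall>\<theta>\<in>I. integrable (tilt \<nu> \<theta>) \<psi>"
  shows "(convex_on UNIV \<psi> \<longrightarrow> convex_on (tilt_mean \<nu> ` I) (tilt_Psi \<nu> I \<psi>))
       \<and> (convex_on UNIV \<psi> \<and> \<not> (\<exists>a b. AE x in \<nu>. \<psi> x = a * x + b) \<longrightarrow>
           (\<exists>\<Psi>' \<Psi>''.
              (\<forall>r\<in>tilt_mean \<nu> ` I. (tilt_Psi \<nu> I \<psi> has_real_derivative \<Psi>' r) (at r)) \<and>
              (\<forall>r\<in>tilt_mean \<nu> ` I. (\<Psi>' has_real_derivative \<Psi>'' r) (at r)) \<and>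
              (\<forall>r\<in>tilt_mean \<nu> ` I. \<Psi>'' r > 0))
           \<and> strictly_convex_on (tilt_mean \<nu> ` I) (tilt_Psi \<nu> I \<psi>))"
proof -
  interpret exponential_family \<nu> I
    using assms(1,2,4,5,7) by (rule exponential_family.intro)
  have lap: "laplace_integrable \<nu> I \<psi>"
    using assms(8,9) by (auto simp: laplace_integrable_def integrable_tilt_iff)
  let ?S = "tilt_mean \<nu> ` I"
  show ?thesis
  proof (cases "convex_on UNIV \<psi>")
    case True
    then obtain \<Psi>' \<Psi>'' where d1: "\<forall>r\<in>?S. (tilt_Psi \<nu> I \<psi> has_real_derivative \<Psi>' r) (at r)"
      and d2: "\<forall>r\<in>?S. (\<Psi>' has_real_derivative \<Psi>'' r) (at r)" and nonneg: "\<forall>r\<in>?S. \<Psi>'' r \<ge> 0"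
      and pos: "\<not> (\<exists>a b. AE x in \<nu>. \<psi> x = a * x + b) \<Longrightarrow> \<forall>r\<in>?S. \<Psi>'' r > 0"
      using tilt_Psi_convex_derivatives[OF assms(8) lap assms(3)] by blast
    have "convex_on ?S (tilt_Psi \<nu> I \<psi>)"
      using convex_tilt_mean_image d1 d2 nonneg by (intro f''_ge0_imp_convex[where f' = \<Psi>' and f'' = \<Psi>'']) auto
    moreover have "strictly_convex_on ?S (tilt_Psi \<nu> I \<psi>)" if "\<forall>r\<in>?S. \<Psi>'' r > 0"
      using convex_tilt_mean_image d1 d2 that
      by (intro strictly_convex_on_if_deriv2_pos[where f' = \<Psi>' and f'' = \<Psi>'']) auto
    ultimately show ?thesis using d1 d2 pos by blast
  qed simp
qed

end
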